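(* Let $\psi,\varphi$ be metric formulas and $m,n\in\mathbb{N}$ with $0<m<n-1$. Then, with respect to strict timed traces, $$\psi\,\mathsf{U}_{[m,n)}\,\varphi\equiv\psi\wedge\Big(\bigvee_{i=1}^{m}\circ_{[i,i]}\big(\psi\,\mathsf{U}_{[m-i,n-i)}\,\varphi\big)\vee\bigvee_{i=m+1}^{n-1}\circ_{[i,i]}\big(\psi\,\mathsf{U}_{[0,n-1-i]}\,\varphi\big)\Big),$$ $$\psi\,\mathsf{R}_{[m,n)}\,\varphi\equiv\psi\vee\Big(\bigwedge_{i=1}^{m}\widehat{\circ}_{[i,i]}\big(\psi\,\mathsf{R}_{[m-i,n-i)}\,\varphi\big)\wedge\bigwedge_{i=m+1}^{n-1}\widehat{\circ}_{[i,i]}\big(\psi\,\mathsf{R}_{[0,n-1-i]}\,\varphi\big)\Big),$$ and the same holds for the dual past operators, i.e. the equivalences obtained by replacing $\mathsf{U},\mathsf{R},\circ,\widehat{\circ}$ by $\mathsf{S},\mathsf{T},\bullet,\widehat{\bullet}$ respectively.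
   Context: Write $[m,n)=\{i\in\mathbb{N}\mid m\le i<n\}$, $[m,n]=\{i\in\mathbb{N}\mid m\le i\le n\}$, $(m,n]=\{i\in\mathbb{N}\mid m<i\le n\}$. Metric formulas over a set of atoms $\mathcal{A}$: $\varphi::=p\mid\bot\mid\varphi_1\wedge\varphi_2\mid\varphi_1\vee\varphi_2\mid\varphi_1\to\varphi_2\mid\bullet_I\varphi\mid\varphi_1\mathsf{S}_I\varphi_2\mid\varphi_1\mathsf{T}_I\varphi_2\mid\circ_I\varphi\mid\varphi_1\mathsf{U}_I\varphi_2\mid\varphi_1\mathsf{R}_I\varphi_2$, $p\in\mathcal{A}$, $I=[m,n)$, $m\in\mathbb{N}$, $n\in\mathbb{N}\cup\{\omega\}$; a subscript $[m,n]$ with $n\in\mathbb{N}$ abbreviates $[m,n+1)$. Derived: $\neg\varphi:=\varphi\to\bot$, $\top:=\neg\bot$, $\widehat{\bullet}_I\varphi:=\bullet_I\varphi\vee\neg\bullet_I\top$, $\widehat{\circ}_I\varphi:=\circ_I\varphi\vee\neg\circ_I\top$. A timed HT-trace of length $\lambda\in\mathbb{N}\cup\{\omega\}$ is $\mathbf{M}=(\langle\mathbf{H},\mathbf{T}\rangle,\tau)$ with $H_i\subseteq T_i\subseteq\mathcal{A}$ for $i\in[0,\lambda)$, $\tau:[0,\lambda)\to\mathbb{N}$, $\tau(0)=0$, $\tau(i)\le\tau(i+1)$; it is strict if $\tau(i)<\tau(i+1)$ whenever $i+1<\lambda$. Satisfaction at $k\in[0,\lambda)$: $\bot$ never; $p$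 iff $p\in H_k$; $\wedge,\vee$ usual; $\varphi\to\psi$ iff for both $\mathbf{M}'=\mathbf{M}$ and $\mathbf{M}'=(\langle\mathbf{T},\mathbf{T}\rangle,\tau)$, $\mathbf{M}',k\not\models\varphi$ or $\mathbf{M}',k\models\psi$; $\bullet_I\varphi$ iff $k>0$, $\mathbf{M},k-1\models\varphi$, $\tau(k)-\tau(k-1)\in I$; $\varphi\mathsf{S}_I\psi$ iff for some $j\in[0,k]$ with $\tau(k)-\tau(j)\in I$, $\mathbf{M},j\models\psi$ and $\mathbf{M},i\models\varphi$ for all $i\in(j,k]$; $\varphi\mathsf{T}_I\psi$ iff for all $j\in[0,k]$ with $\tau(k)-\tau(j)\in I$, $\mathbf{M},j\models\psi$ or $\mathbf{M},i\models\varphi$ for some $i\in(j,k]$; $\circ_I\varphi$ iff $k+1<\lambda$, $\mathbf{M},k+1\models\varphi$, $\tau(k+1)-\tau(k)\in I$; $\varphi\mathsf{U}_I\psi$ iff for some $j\in[k,\lambda)$ with $\tau(j)-\tau(k)\in I$, $\mathbf{M},j\models\psi$ and $\mathbf{M},i\models\varphi$ for all $i\in[k,j)$; $\varphi\mathsf{R}_I\psi$ iff for all $j\in[k,\lambda)$ with $\tau(j)-\tau(k)\in I$, $\mathbf{M},j\models\psi$ or $\mathbf{M},i\models\varphi$ for some $i\in[k,j)$. Here $\alpha\equiv\beta$ (w.r.t. strict traces) means: for every strict timed HT-trace $\mathbf{M}$ of any length $\lambda$ and every $k\in[0,\lambda)$, $\mathbf{M},k\models\alpha$ iff $\mathbf{M},k\models\beta$.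 *)

theory Defs
  imports Main "HOL-Library.Extended_Nat"
begin

(* Interval [m,n) with m :: nat and n :: enat (\<infinity> plays the role of \<omega>) *)
datatype interval = Ivl nat enat

definition in_ivl :: "nat \<Rightarrow> interval \<Rightarrow> bool" where
  "in_ivl d I = (case I of Ivl m n \<Rightarrow> m \<le> d \<and> enat d < n)"

(* [m,n] with n \<in> \<nat> abbreviates [m,n+1) *)
definition cIvl :: "nat \<Rightarrow> nat \<Rightarrow> interval" where
  "cIvl m n = Ivl m (enat (n + 1))"

datatype 'a mform =
    Atom 'a
  | Bot
  | And "'a mform" "'a mform"
  | Or "'a mform" "'a mform"
  | Imp "'a mform" "'a mform"
  | Prev interval "'a mform"
  | Since interval "'a mform" "'a mform"
  | Trigger interval "'a mform" "'a mform"
  | Next interval "'a mform"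
  | Until interval "'a mform" "'a mform"
  | Release interval "'a mform" "'a mform"

definition Neg :: "'a mform \<Rightarrow> 'a mform" where "Neg \<phi> = Imp \<phi> Bot"
definition Top :: "'a mform" where "Top = Neg Bot"
definition WPrev :: "interval \<Rightarrow> 'a mform \<Rightarrow> 'a mform" where
  "WPrev I \<phi> = Or (Prev I \<phi>) (Neg (Prev I Top))"
definition WNext :: "interval \<Rightarrow> 'a mform \<Rightarrow> 'a mform" where
  "WNext I \<phi> = Or (Next I \<phi>) (Neg (Next I Top))"

fun big_or :: "'a mform list \<Rightarrow> 'a mform" where
  "big_or [] = Bot"
| "big_or [x] = x"
| "big_or (x # xs) = Or x (big_or xs)"

fun big_and :: "'a mform list \<Rightarrow> 'a mform" where
  "big_and [] = Top"
| "big_and [x] = x"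
| "big_and (x # xs) = And x (big_and xs)"

(* Satisfaction in the timed HT-trace (<H,T>,\<tau>) of length L at position k *)
fun sat :: "enat \<Rightarrow> (nat \<Rightarrow> 'a set) \<Rightarrow> (nat \<Rightarrow> 'a set) \<Rightarrow> (nat \<Rightarrow> nat) \<Rightarrow> nat \<Rightarrow> 'a mform \<Rightarrow> bool" where
  "sat L H T \<tau> k (Atom p) = (p \<in> H k)"
| "sat L H T \<tau> k Bot = False"
| "sat L H T \<tau> k (And \<phi> \<psi>) = (sat L H T \<tau> k \<phi> \<and> sat L H T \<tau> k \<psi>)"
| "sat L H T \<tau> k (Or \<phi> \<psi>) = (sat L H T \<tau> k \<phi> \<or> sat L H T \<tau> k \<psi>)"
| "sat L H T \<tau> k (Imp \<phi> \<psi>) =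
     ((\<not> sat L H T \<tau> k \<phi> \<or> sat L H T \<tau> k \<psi>) \<and>
      (\<not> sat L T T \<tau> k \<phi> \<or> sat L T T \<tau> k \<psi>))"
| "sat L H T \<tau> k (Prev I \<phi>) =
     (k > 0 \<and> sat L H T \<tau> (k - 1) \<phi> \<and> in_ivl (\<tau> k - \<tau> (k - 1)) I)"
| "sat L H T \<tau> k (Since I \<phi> \<psi>) =
     (\<exists>j\<le>k. in_ivl (\<tau> k - \<tau> j) I \<and> sat L H T \<tau> j \<psi> \<and>
        (\<forall>i. j < i \<and> i \<le> k \<longrightarrow> sat L H T \<tau> i \<phi>))"
| "sat L H T \<tau> k (Trigger I \<phi> \<psi>) =
     (\<forall>j\<le>k. in_ivl (\<tau> k - \<tau> j) I \<longrightarrow> sat L H T \<tau> j \<psi> \<or>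
        (\<exists>i. j < i \<and> i \<le> k \<and> sat L H T \<tau> i \<phi>))"
| "sat L H T \<tau> k (Next I \<phi>) =
     (enat (k + 1) < L \<and> sat L H T \<tau> (k + 1) \<phi> \<and> in_ivl (\<tau> (k + 1) - \<tau> k) I)"
| "sat L H T \<tau> k (Until I \<phi> \<psi>) =
     (\<exists>j. k \<le> j \<and> enat j < L \<and> in_ivl (\<tau> j - \<tau> k) I \<and> sat L H T \<tau> j \<psi> \<and>
        (\<forall>i. k \<le> i \<and> i < j \<longrightarrow> sat L H T \<tau> i \<phi>))"
| "sat L H T \<tau> k (Release I \<phi> \<psi>) =
     (\<forall>j. k \<le> j \<and> enat j < L \<and> in_ivl (\<tau> j - \<tau> k) I \<longrightarrow> sat L H T \<tau> j \<psi> \<or>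
        (\<exists>i. k \<le> i \<and> i < j \<and> sat L H T \<tau> i \<phi>))"

definition strict_trace :: "enat \<Rightarrow> (nat \<Rightarrow> 'a set) \<Rightarrow> (nat \<Rightarrow> 'a set) \<Rightarrow> (nat \<Rightarrow> nat) \<Rightarrow> bool" where
  "strict_trace L H T \<tau> =
     ((\<forall>i. enat i < L \<longrightarrow> H i \<subseteq> T i) \<and> \<tau> 0 = 0 \<and>
      (\<forall>i. enat (i + 1) < L \<longrightarrow> \<tau> i < \<tau> (i + 1)))"

definition equiv_strict :: "'a mform \<Rightarrow> 'a mform \<Rightarrow> bool" where
  "equiv_strict \<alpha> \<beta> =
     (\<forall>L H T \<tau> k. strict_trace L H T \<tau> \<longrightarrow> enat k < L \<longrightarrow>
        (sat L H T \<tau> k \<alpha> \<longleftrightarrow> sat L H T \<tau> k \<beta>))"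

end

theory Submission
  imports Defs
begin

text \<open>
  If \<open>m > 0\<close>, a witness for the until over \<open>[m, n)\<close> at position \<open>k\<close> lies strictly after \<open>k\<close>.
  So the formula holds iff \<open>\<psi>\<close> holds at \<open>k\<close> and, writing \<open>d\<close> for the delay to position \<open>k + 1\<close>,
  the same until over the shifted interval \<open>[m - d, n - d)\<close> holds at \<open>k + 1\<close>. On strict traces
  \<open>d \<ge> 1\<close>, and \<open>d < n\<close> unless the shifted interval is empty, so the disjunction over the
  possible delays \<open>d \<in> [1, n)\<close> says exactly this. Release is the classical dual of until with
  negated arguments, and since and trigger are the mirror images towards the past, so the same
  one-step argument covers all four operators.
\<close>

lemma in_ivl_cIvl_point [simp]: "in_ivl d (cIvl i i) \<longleftrightarrow> d = i"
  by (auto simp: in_ivl_def cIvl_def)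

lemma in_ivl_Ivl: "in_ivl d (Ivl m n) \<longleftrightarrow> m \<le> d \<and> enat d < n"
  by (simp add: in_ivl_def)

lemma in_ivl_add_shift: "in_ivl (d + x) (Ivl m n) \<longleftrightarrow> in_ivl x (Ivl (m - d) (n - enat d))"
  by (cases n) (auto simp: in_ivl_Ivl)

lemma cIvl_0_eq_Ivl_shift:
  assumes "m < i" and "i < n"
  shows "cIvl 0 (n - 1 - i) = Ivl (m - i) (enat (n - i))"
  using assms by (simp add: cIvl_def)

lemma sat_big_or: "sat L H T \<tau> k (big_or xs) \<longleftrightarrow> (\<exists>x\<in>set xs. sat L H T \<tau> k x)"
  by (induction xs rule: big_or.induct) auto

lemma sat_Top [simp]: "sat L H T \<tau> k Top"
  by (simp add: Top_def Neg_def)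

lemma sat_big_and: "sat L H T \<tau> k (big_and xs) \<longleftrightarrow> (\<forall>x\<in>set xs. sat L H T \<tau> k x)"
  by (induction xs rule: big_and.induct) auto

lemma sat_big_or_map:
  "sat L H T \<tau> k (big_or (map f xs)) \<longleftrightarrow> (\<exists>i\<in>set xs. sat L H T \<tau> k (f i))"
  by (simp add: sat_big_or)

lemma sat_big_and_map:
  "sat L H T \<tau> k (big_and (map f xs)) \<longleftrightarrow> (\<forall>i\<in>set xs. sat L H T \<tau> k (f i))"
  by (simp add: sat_big_and)

lemma sat_Next_point:
  "sat L H T \<tau> k (Next (cIvl i i) \<phi>) \<longleftrightarrow>
     enat (k + 1) < L \<and> sat L H T \<tau> (k + 1) \<phi> \<and> \<tau> (k + 1) - \<tau> k = i"
  by simp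

lemma sat_Prev_point:
  "sat L H T \<tau> k (Prev (cIvl i i) \<phi>) \<longleftrightarrow>
     0 < k \<and> sat L H T \<tau> (k - 1) \<phi> \<and> \<tau> k - \<tau> (k - 1) = i"
  by simp

lemma sat_WNext_point:
  "sat L H T \<tau> k (WNext (cIvl i i) \<phi>) \<longleftrightarrow>
     (enat (k + 1) < L \<and> \<tau> (k + 1) - \<tau> k = i \<longrightarrow> sat L H T \<tau> (k + 1) \<phi>)"
  by (auto simp: WNext_def Neg_def)

lemma sat_WPrev_point:
  "sat L H T \<tau> k (WPrev (cIvl i i) \<phi>) \<longleftrightarrow>
     (0 < k \<and> \<tau> k - \<tau> (k - 1) = i \<longrightarrow> sat L H T \<tau> (k - 1) \<phi>)"
  by (auto simp: WPrev_def Neg_def)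

lemma sat_Or_big_or:
  "sat L H T \<tau> k (Or (big_or xs) (big_or ys)) \<longleftrightarrow> sat L H T \<tau> k (big_or (xs @ ys))"
  by (auto simp: sat_big_or)

lemma sat_And_big_and:
  "sat L H T \<tau> k (And (big_and xs) (big_and ys)) \<longleftrightarrow> sat L H T \<tau> k (big_and (xs @ ys))"
  by (auto simp: sat_big_and)

lemma strict_trace_less:
  assumes "strict_trace L H T \<tau>" and "i < j" and "enat j < L"
  shows "\<tau> i < \<tau> j"
  using assms(2,3)
proof (induction j rule: less_Suc_induct)
  case (1 j)
  with assms(1) show ?case
    by (simp add: strict_trace_def)
next
  case (2 i j k)
  then show ?case
    by (meson enat_ord_simps(2) less_trans)
qed

lemma strict_trace_mono:
  assumes "strict_trace L H T \<tau>" and "i \<le> j" and "enat j < L"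
  shows "\<tau> i \<le> \<tau> j"
  using strict_trace_less[OF assms(1) _ assms(3)] assms(2) by (auto simp: le_less)

text \<open>For \<open>i > m\<close> the truncated difference \<open>m - i\<close> is \<open>0\<close>, so the two families of intervals
  in the expansions are one family \<open>[m - i, n - i)\<close>, \<open>1 \<le> i < n\<close>.\<close>

lemma map_shifted_intervals_split:
  assumes "m < n"
  shows "map (\<lambda>i. f i (Ivl (m - i) (enat (n - i)))) [1..<m+1]
           @ map (\<lambda>i. f i (cIvl 0 (n - 1 - i))) [m+1..<n]
         = map (\<lambda>i. f i (Ivl (m - i) (enat (n - i)))) [1..<n]"
proof -
  have upper: "map (\<lambda>i. f i (cIvl 0 (n - 1 - i))) [m+1..<n]
             = map (\<lambda>i. f i (Ivl (m - i) (enat (n - i)))) [m+1..<n]"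
  proof (rule map_cong)
    fix i assume "i \<in> set [m+1..<n]"
    then show "f i (cIvl 0 (n - 1 - i)) = f i (Ivl (m - i) (enat (n - i)))"
      using cIvl_0_eq_Ivl_shift[of m i n] by simp
  qed simp
  have "m + 1 + (n - (m + 1)) = n"
    using assms by simp
  then have "[1..<n] = [1..<m+1] @ [m+1..<n]"
    using upt_add_eq_append[of 1 "m + 1" "n - (m + 1)"] by simp
  then show ?thesis
    unfolding upper by (simp only: map_append)
qed

definition timed_until ::
    "enat \<Rightarrow> (nat \<Rightarrow> nat) \<Rightarrow> interval \<Rightarrow> (nat \<Rightarrow> bool) \<Rightarrow> (nat \<Rightarrow> bool) \<Rightarrow> nat \<Rightarrow> bool" where
  "timed_until L \<tau> I P Q k \<longleftrightarrow>
     (\<exists>j. k \<le> j \<and> enat j < L \<and> in_ivl (\<tau> j - \<tau> k) I \<and> Q j \<and> (\<forall>i. k \<le> i \<and> i < j \<longrightarrow> P i))"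

definition timed_since ::
    "(nat \<Rightarrow> nat) \<Rightarrow> interval \<Rightarrow> (nat \<Rightarrow> bool) \<Rightarrow> (nat \<Rightarrow> bool) \<Rightarrow> nat \<Rightarrow> bool" where
  "timed_since \<tau> I P Q k \<longleftrightarrow>
     (\<exists>j\<le>k. in_ivl (\<tau> k - \<tau> j) I \<and> Q j \<and> (\<forall>i. j < i \<and> i \<le> k \<longrightarrow> P i))"

lemma sat_Until_iff_timed_until:
  "sat L H T \<tau> k (Until I \<psi> \<phi>) \<longleftrightarrow>
     timed_until L \<tau> I (\<lambda>i. sat L H T \<tau> i \<psi>) (\<lambda>i. sat L H T \<tau> i \<phi>) k"
  by (simp add: timed_until_def)

lemma sat_Release_iff_not_timed_until:
  "sat L H T \<tau> k (Release I \<psi> \<phi>) \<longleftrightarrow>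
     \<not> timed_until L \<tau> I (\<lambda>i. \<not> sat L H T \<tau> i \<psi>) (\<lambda>i. \<not> sat L H T \<tau> i \<phi>) k"
  by (auto simp: timed_until_def)

lemma sat_Since_iff_timed_since:
  "sat L H T \<tau> k (Since I \<psi> \<phi>) \<longleftrightarrow>
     timed_since \<tau> I (\<lambda>i. sat L H T \<tau> i \<psi>) (\<lambda>i. sat L H T \<tau> i \<phi>) k"
  by (simp add: timed_since_def)

lemma sat_Trigger_iff_not_timed_since:
  "sat L H T \<tau> k (Trigger I \<psi> \<phi>) \<longleftrightarrow>
     \<not> timed_since \<tau> I (\<lambda>i. \<not> sat L H T \<tau> i \<psi>) (\<lambda>i. \<not> sat L H T \<tau> i \<phi>) k"
  by (auto simp: timed_since_def)

lemma timed_until_step: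
  fixes k :: nat
  assumes mono: "\<And>i j. i \<le> j \<Longrightarrow> enat j < L \<Longrightarrow> \<tau> i \<le> \<tau> j" and "0 < m"
  defines "d \<equiv> \<tau> (k + 1) - \<tau> k"
  shows "timed_until L \<tau> (Ivl m n) P Q k \<longleftrightarrow>
           P k \<and> enat (k + 1) < L \<and> timed_until L \<tau> (Ivl (m - d) (n - enat d)) P Q (k + 1)"
proof -
  have shift: "\<tau> j - \<tau> k = d + (\<tau> j - \<tau> (k + 1))" if "k + 1 \<le> j" "enat j < L" for j
  proof -
    have "enat (k + 1) < L"
      using that by (meson enat_ord_simps(1) le_less_trans)
    then show ?thesis
      using mono[of k "k + 1"] mono[of "k + 1" j] that unfolding d_def by simp
  qed
  have split_guard: "(\<forall>i. k \<le> i \<and> i < j \<longrightarrow> P i) \<longleftrightarrow> P k \<and> (\<forall>i. k + 1 \<le> i \<and> i < j \<longrightarrow> P i)"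
    if "k < j" for j
    using that by (auto simp: Suc_le_eq) (metis le_neq_implies_less)
  have "timed_until L \<tau> (Ivl m n) P Q k \<longleftrightarrow>
      (\<exists>j. k + 1 \<le> j \<and> enat j < L \<and> in_ivl (\<tau> j - \<tau> k) (Ivl m n) \<and> Q j \<and> (\<forall>i. k \<le> i \<and> i < j \<longrightarrow> P i))"
  proof -
    have "\<not> in_ivl (\<tau> k - \<tau> k) (Ivl m n)"
      using \<open>0 < m\<close> by (simp add: in_ivl_Ivl)
    then show ?thesis
      unfolding timed_until_def by (intro ex_cong1) (fastforce simp: Suc_le_eq le_less)
  qed
  also have "\<dots> \<longleftrightarrow>
      (\<exists>j. k + 1 \<le> j \<and> enat j < L \<and> in_ivl (\<tau> j - \<tau> (k + 1)) (Ivl (m - d) (n - enat d)) \<and> Q j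
         \<and> P k \<and> (\<forall>i. k + 1 \<le> i \<and> i < j \<longrightarrow> P i))"
    using shift split_guard by (intro ex_cong1) (auto simp: in_ivl_add_shift Suc_le_eq)
  also have "\<dots> \<longleftrightarrow> P k \<and> enat (k + 1) < L \<and> timed_until L \<tau> (Ivl (m - d) (n - enat d)) P Q (k + 1)"
    unfolding timed_until_def by (auto intro: le_less_trans[rotated])
  finally show ?thesis .
qed

lemma timed_since_step:
  fixes k :: nat
  assumes mono: "\<And>i j. i \<le> j \<Longrightarrow> j \<le> k \<Longrightarrow> \<tau> i \<le> \<tau> j" and "0 < m"
  defines "d \<equiv> \<tau> k - \<tau> (k - 1)"
  shows "timed_since \<tau> (Ivl m n) P Q k \<longleftrightarrow>
           P k \<and> 0 < k \<and> timed_since \<tau> (Ivl (m - d) (n - enat d)) P Q (k - 1)"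
proof -
  have shift: "\<tau> k - \<tau> j = d + (\<tau> (k - 1) - \<tau> j)" if "j < k" for j
    using mono[of j "k - 1"] mono[of "k - 1" k] that unfolding d_def by simp
  have split_guard: "(\<forall>i. j < i \<and> i \<le> k \<longrightarrow> P i) \<longleftrightarrow> P k \<and> (\<forall>i. j < i \<and> i \<le> k - 1 \<longrightarrow> P i)"
    if "j < k" for j
    using that by (auto simp: le_less)
  have "timed_since \<tau> (Ivl m n) P Q k \<longleftrightarrow>
      (\<exists>j. j < k \<and> in_ivl (\<tau> k - \<tau> j) (Ivl m n) \<and> Q j \<and> (\<forall>i. j < i \<and> i \<le> k \<longrightarrow> P i))"
  proof -
    have "\<not> in_ivl (\<tau> k - \<tau> k) (Ivl m n)"
      using \<open>0 < m\<close> by (simp add: in_ivl_Ivl)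
    then show ?thesis
      unfolding timed_since_def by (intro ex_cong1) (fastforce simp: le_less)
  qed
  also have "\<dots> \<longleftrightarrow>
      (\<exists>j. j < k \<and> in_ivl (\<tau> (k - 1) - \<tau> j) (Ivl (m - d) (n - enat d)) \<and> Q j
         \<and> P k \<and> (\<forall>i. j < i \<and> i \<le> k - 1 \<longrightarrow> P i))"
    using shift split_guard by (intro ex_cong1) (auto simp: in_ivl_add_shift)
  also have "\<dots> \<longleftrightarrow> P k \<and> 0 < k \<and> timed_since \<tau> (Ivl (m - d) (n - enat d)) P Q (k - 1)"
  proof -
    have "j < k \<longleftrightarrow> 0 < k \<and> j \<le> k - 1" for j
      by arith
    then show ?thesis
      unfolding timed_since_def by blast
  qed
  finally show ?thesis .
qed

lemma timed_until_by_delay: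
  assumes mono: "\<And>i j. i \<le> j \<Longrightarrow> enat j < L \<Longrightarrow> \<tau> i \<le> \<tau> j"
    and strict: "enat (k + 1) < L \<Longrightarrow> \<tau> k < \<tau> (k + 1)" and "0 < m"
  shows "timed_until L \<tau> (Ivl m (enat n)) P Q k \<longleftrightarrow>
    P k \<and> (\<exists>i\<in>{1..<n}. enat (k + 1) < L \<and> timed_until L \<tau> (Ivl (m - i) (enat (n - i))) P Q (k + 1)
                          \<and> \<tau> (k + 1) - \<tau> k = i)"
proof -
  txt \<open>Strictness makes the delay \<open>d\<close> positive; for \<open>d \<ge> n\<close> the shifted interval is empty.\<close>
  let ?d = "\<tau> (k + 1) - \<tau> k"
  have "?d < n" if "timed_until L \<tau> (Ivl (m - ?d) (enat (n - ?d))) P Q (k + 1)"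
    using that by (cases "?d < n") (simp_all add: timed_until_def in_ivl_Ivl)
  moreover have "1 \<le> ?d" if "enat (k + 1) < L"
    using strict[OF that] by simp
  ultimately show ?thesis
    by (auto simp: timed_until_step[where L = L and \<tau> = \<tau>, OF mono \<open>0 < m\<close>])
qed

lemma timed_since_by_delay:
  assumes mono: "\<And>i j. i \<le> j \<Longrightarrow> j \<le> k \<Longrightarrow> \<tau> i \<le> \<tau> j"
    and strict: "0 < k \<Longrightarrow> \<tau> (k - 1) < \<tau> k" and "0 < m"
  shows "timed_since \<tau> (Ivl m (enat n)) P Q k \<longleftrightarrow>
    P k \<and> (\<exists>i\<in>{1..<n}. 0 < k \<and> timed_since \<tau> (Ivl (m - i) (enat (n - i))) P Q (k - 1)
                          \<and> \<tau> k - \<tau> (k - 1) = i)"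
proof -
  let ?d = "\<tau> k - \<tau> (k - 1)"
  have "?d < n" if "timed_since \<tau> (Ivl (m - ?d) (enat (n - ?d))) P Q (k - 1)"
    using that by (cases "?d < n") (simp_all add: timed_since_def in_ivl_Ivl)
  moreover have "1 \<le> ?d" if "0 < k"
    using strict[OF that] by simp
  ultimately show ?thesis
    by (auto simp: timed_since_step[where \<tau> = \<tau>, OF mono \<open>0 < m\<close>])
qed

lemma sat_Until_expansion:
  assumes st: "strict_trace L H T \<tau>" and "0 < m" and "m < n"
  shows "sat L H T \<tau> k (Until (Ivl m (enat n)) \<psi> \<phi>) \<longleftrightarrow>
    sat L H T \<tau> k (And \<psi> (Or
        (big_or (map (\<lambda>i. Next (cIvl i i) (Until (Ivl (m - i) (enat (n - i))) \<psi> \<phi>)) [1..<m+1]))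
        (big_or (map (\<lambda>i. Next (cIvl i i) (Until (cIvl 0 (n - 1 - i)) \<psi> \<phi>)) [m+1..<n]))))"
proof -
  have strict: "enat (k + 1) < L \<Longrightarrow> \<tau> k < \<tau> (k + 1)"
    using strict_trace_less[OF st] by simp
  show ?thesis
    by (simp only: sat.simps(3) sat_Or_big_or
      map_shifted_intervals_split[OF \<open>m < n\<close>, of "\<lambda>i J. Next (cIvl i i) (Until J \<psi> \<phi>)"]
      sat_big_or_map set_upt sat_Next_point sat_Until_iff_timed_until
      timed_until_by_delay[OF strict_trace_mono[OF st] strict \<open>0 < m\<close>])
qed

lemma sat_Release_expansion:
  assumes st: "strict_trace L H T \<tau>" and "0 < m" and "m < n"
  shows "sat L H T \<tau> k (Release (Ivl m (enat n)) \<psi> \<phi>) \<longleftrightarrow>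
    sat L H T \<tau> k (Or \<psi> (And
        (big_and (map (\<lambda>i. WNext (cIvl i i) (Release (Ivl (m - i) (enat (n - i))) \<psi> \<phi>)) [1..<m+1]))
        (big_and (map (\<lambda>i. WNext (cIvl i i) (Release (cIvl 0 (n - 1 - i)) \<psi> \<phi>)) [m+1..<n]))))"
proof -
  have strict: "enat (k + 1) < L \<Longrightarrow> \<tau> k < \<tau> (k + 1)"
    using strict_trace_less[OF st] by simp
  show ?thesis
    by (simp only: sat.simps(4) sat_And_big_and
      map_shifted_intervals_split[OF \<open>m < n\<close>, of "\<lambda>i J. WNext (cIvl i i) (Release J \<psi> \<phi>)"]
      sat_big_and_map set_upt sat_WNext_point sat_Release_iff_not_timed_until
      timed_until_by_delay[OF strict_trace_mono[OF st] strict \<open>0 < m\<close>])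
      blast
qed

lemma sat_Since_expansion:
  assumes st: "strict_trace L H T \<tau>" and "enat k < L" and "0 < m" and "m < n"
  shows "sat L H T \<tau> k (Since (Ivl m (enat n)) \<psi> \<phi>) \<longleftrightarrow>
    sat L H T \<tau> k (And \<psi> (Or
        (big_or (map (\<lambda>i. Prev (cIvl i i) (Since (Ivl (m - i) (enat (n - i))) \<psi> \<phi>)) [1..<m+1]))
        (big_or (map (\<lambda>i. Prev (cIvl i i) (Since (cIvl 0 (n - 1 - i)) \<psi> \<phi>)) [m+1..<n]))))"
proof -
  have mono: "\<And>i j. i \<le> j \<Longrightarrow> j \<le> k \<Longrightarrow> \<tau> i \<le> \<tau> j"
    using strict_trace_mono[OF st] \<open>enat k < L\<close> by (meson enat_ord_simps(1) le_less_trans)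
  have strict: "0 < k \<Longrightarrow> \<tau> (k - 1) < \<tau> k"
    using strict_trace_less[OF st _ \<open>enat k < L\<close>] by simp
  show ?thesis
    by (simp only: sat.simps(3) sat_Or_big_or
      map_shifted_intervals_split[OF \<open>m < n\<close>, of "\<lambda>i J. Prev (cIvl i i) (Since J \<psi> \<phi>)"]
      sat_big_or_map set_upt sat_Prev_point sat_Since_iff_timed_since
      timed_since_by_delay[OF mono strict \<open>0 < m\<close>])
qed

lemma sat_Trigger_expansion:
  assumes st: "strict_trace L H T \<tau>" and "enat k < L" and "0 < m" and "m < n"
  shows "sat L H T \<tau> k (Trigger (Ivl m (enat n)) \<psi> \<phi>) \<longleftrightarrow>
    sat L H T \<tau> k (Or \<psi> (And
        (big_and (map (\<lambda>i. WPrev (cIvl i i) (Trigger (Ivl (m - i) (enat (n - i))) \<psi> \<phi>)) [1..<m+1]))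
        (big_and (map (\<lambda>i. WPrev (cIvl i i) (Trigger (cIvl 0 (n - 1 - i)) \<psi> \<phi>)) [m+1..<n]))))"
proof -
  have mono: "\<And>i j. i \<le> j \<Longrightarrow> j \<le> k \<Longrightarrow> \<tau> i \<le> \<tau> j"
    using strict_trace_mono[OF st] \<open>enat k < L\<close> by (meson enat_ord_simps(1) le_less_trans)
  have strict: "0 < k \<Longrightarrow> \<tau> (k - 1) < \<tau> k"
    using strict_trace_less[OF st _ \<open>enat k < L\<close>] by simp
  show ?thesis
    by (simp only: sat.simps(4) sat_And_big_and
      map_shifted_intervals_split[OF \<open>m < n\<close>, of "\<lambda>i J. WPrev (cIvl i i) (Trigger J \<psi> \<phi>)"]
      sat_big_and_map set_upt sat_WPrev_point sat_Trigger_iff_not_timed_since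
      timed_since_by_delay[OF mono strict \<open>0 < m\<close>])
      blast
qed

theorem theorem2:
  fixes \<psi> \<phi> :: "'a mform" and m n :: nat
  assumes "0 < m" and "m < n - 1"
  shows
  "equiv_strict (Until (Ivl m (enat n)) \<psi> \<phi>)
     (And \<psi> (Or
        (big_or (map (\<lambda>i. Next (cIvl i i) (Until (Ivl (m - i) (enat (n - i))) \<psi> \<phi>)) [1..<m+1]))
        (big_or (map (\<lambda>i. Next (cIvl i i) (Until (cIvl 0 (n - 1 - i)) \<psi> \<phi>)) [m+1..<n]))))
   \<and> equiv_strict (Release (Ivl m (enat n)) \<psi> \<phi>)
     (Or \<psi> (And
        (big_and (map (\<lambda>i. WNext (cIvl i i) (Release (Ivl (m - i) (enat (n - i))) \<psi> \<phi>)) [1..<m+1]))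
        (big_and (map (\<lambda>i. WNext (cIvl i i) (Release (cIvl 0 (n - 1 - i)) \<psi> \<phi>)) [m+1..<n]))))
   \<and> equiv_strict (Since (Ivl m (enat n)) \<psi> \<phi>)
     (And \<psi> (Or
        (big_or (map (\<lambda>i. Prev (cIvl i i) (Since (Ivl (m - i) (enat (n - i))) \<psi> \<phi>)) [1..<m+1]))
        (big_or (map (\<lambda>i. Prev (cIvl i i) (Since (cIvl 0 (n - 1 - i)) \<psi> \<phi>)) [m+1..<n]))))
   \<and> equiv_strict (Trigger (Ivl m (enat n)) \<psi> \<phi>)
     (Or \<psi> (And
        (big_and (map (\<lambda>i. WPrev (cIvl i i) (Trigger (Ivl (m - i) (enat (n - i))) \<psi> \<phi>)) [1..<m+1]))
        (big_and (map (\<lambda>i. WPrev (cIvl i i) (Trigger (cIvl 0 (n - 1 - i)) \<psi> \<phi>)) [m+1..<n]))))"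
proof -
  have "m < n"
    using assms(2) by simp
  then show ?thesis
    unfolding equiv_strict_def
    by (intro conjI allI impI)
      (simp_all only: sat_Until_expansion[OF _ \<open>0 < m\<close> \<open>m < n\<close>]
        sat_Release_expansion[OF _ \<open>0 < m\<close> \<open>m < n\<close>] sat_Since_expansion[OF _ _ \<open>0 < m\<close> \<open>m < n\<close>]
        sat_Trigger_expansion[OF _ _ \<open>0 < m\<close> \<open>m < n\<close>])
qed

end
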